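(* Let $M$ be a graded finitely generated graded multiplication $R$-module and $L$ a graded weakly $J_{gr}$-semiprime ideal of $R$ with $\mathrm{ann}_R(M)\subseteq L$. Then $LM$ is a graded weakly $J_{gr}$-semiprime submodule of $M$.
   Context: Standing conventions: $\Gamma$ is a group, $R=\bigoplus_{g\in\Gamma}R_g$ is a commutative $\Gamma$-graded ring with identity, and $M=\bigoplus_{g\in\Gamma}M_g$ is a unitary $\Gamma$-graded $R$-module. $h(R)$, $h(M)$ are the homogeneous elements. A submodule $U$ is graded if $U=\bigoplus_g(U\cap M_g)$; graded ideals are graded submodules of $R$. $M$ is graded finitely generated if $M=Ra_1+\dots+Ra_n$ with $a_i\in h(M)$; $M$ is a graded multiplication module if every graded submodule equals $KM$ for some graded ideal $K$ of $R$. $\mathrm{ann}_R(M)=\{r\in R: rM=0\}$. A graded submodule $U\neq N$ of a graded module $N$ is Gr-maximal if every graded submodule between $U$ and $N$ equals $U$ or $N$; $J_{gr}(N)$ is the intersection of all Gr-maximal submodules of $N$ ($=N$ if none); $J_{gr}(R)$ is this for $N=R$. A proper graded submodule $U$ of $M$ is graded weakly $J_{gr}$-semiprime if whenever $r_g\in h(R)$, $m_h\in h(M)$, $n\in\mathbb{Z}^+$ and $0\neq r_g^nm_h\in U$, then $r_gm_h\in U+J_{gr}(M)$; a graded ideal of $R$ is graded weakly $J_{gr}$-semiprime if it is so as a submodule of the graded $R$-module $R$. *)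

theory Defs
  imports Complex_Main
begin

(* Gamma is the type 'g (a group, written additively); R is the type 'r (commutative ring
   with 1); M is the type 'm with scalar action scale; gradings are Rg, Mg. *)

definition dsum :: "('g \<Rightarrow> 'a::comm_monoid_add set) \<Rightarrow> 'a set \<Rightarrow> bool" where
  "dsum A X \<longleftrightarrow> (\<forall>x\<in>X. \<exists>!c. (\<forall>g. c g \<in> A g) \<and> finite {g. c g \<noteq> 0}
                      \<and> x = (\<Sum>g\<in>{g. c g \<noteq> 0}. c g))"

definition gr_module :: "('r::comm_ring_1 \<Rightarrow> 'm::ab_group_add \<Rightarrow> 'm) \<Rightarrow>
    ('g::group_add \<Rightarrow> 'r set) \<Rightarrow> ('g \<Rightarrow> 'm set) \<Rightarrow> bool" where
  "gr_module scale Rg Mg \<longleftrightarrow> module scale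
     \<and> (\<forall>g. 0 \<in> Mg g \<and> (\<forall>a\<in>Mg g. \<forall>b\<in>Mg g. a - b \<in> Mg g))
     \<and> (\<forall>g h. \<forall>r\<in>Rg g. \<forall>m\<in>Mg h. scale r m \<in> Mg (g + h))
     \<and> dsum Mg UNIV"

definition gr_ring :: "('g::group_add \<Rightarrow> 'r::comm_ring_1 set) \<Rightarrow> bool" where
  "gr_ring Rg \<longleftrightarrow> gr_module (*) Rg Rg"

definition hom :: "('g \<Rightarrow> 'a set) \<Rightarrow> 'a set" where
  "hom A = (\<Union>g. A g)"

definition gr_submod :: "('r::comm_ring_1 \<Rightarrow> 'm::ab_group_add \<Rightarrow> 'm) \<Rightarrow> ('g \<Rightarrow> 'm set) \<Rightarrow> 'm set \<Rightarrow> bool" where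
  "gr_submod scale Mg U \<longleftrightarrow> module.subspace scale U \<and>
     dsum (\<lambda>g. U \<inter> Mg g) U"

definition gr_ideal :: "('g \<Rightarrow> 'r::comm_ring_1 set) \<Rightarrow> 'r set \<Rightarrow> bool" where
  "gr_ideal Rg I \<longleftrightarrow> gr_submod (*) Rg I"

definition prod_submod :: "('r::comm_ring_1 \<Rightarrow> 'm::ab_group_add \<Rightarrow> 'm) \<Rightarrow> 'r set \<Rightarrow> 'm set \<Rightarrow> 'm set" where
  "prod_submod scale K N = module.span scale {scale k m | k m. k \<in> K \<and> m \<in> N}"

definition gr_fin_gen :: "('r::comm_ring_1 \<Rightarrow> 'm::ab_group_add \<Rightarrow> 'm) \<Rightarrow> ('g \<Rightarrow> 'm set) \<Rightarrow> bool" where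
  "gr_fin_gen scale Mg \<longleftrightarrow> (\<exists>A. finite A \<and> A \<subseteq> hom Mg \<and> module.span scale A = UNIV)"

definition gr_mult_module :: "('r::comm_ring_1 \<Rightarrow> 'm::ab_group_add \<Rightarrow> 'm) \<Rightarrow>
    ('g \<Rightarrow> 'r set) \<Rightarrow> ('g \<Rightarrow> 'm set) \<Rightarrow> bool" where
  "gr_mult_module scale Rg Mg \<longleftrightarrow> (\<forall>U. gr_submod scale Mg U \<longrightarrow>
      (\<exists>K. gr_ideal Rg K \<and> U = prod_submod scale K UNIV))"

definition ann :: "('r::comm_ring_1 \<Rightarrow> 'm::ab_group_add \<Rightarrow> 'm) \<Rightarrow> 'r set" where
  "ann scale = {r. \<forall>m. scale r m = 0}"

definition gr_maximal :: "('r::comm_ring_1 \<Rightarrow> 'm::ab_group_add \<Rightarrow> 'm) \<Rightarrow> ('g \<Rightarrow> 'm set) \<Rightarrow> 'm set \<Rightarrow> bool" where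
  "gr_maximal scale Mg U \<longleftrightarrow> gr_submod scale Mg U \<and> U \<noteq> UNIV \<and>
     (\<forall>V. gr_submod scale Mg V \<and> U \<subseteq> V \<longrightarrow> V = U \<or> V = UNIV)"

definition J_gr :: "('r::comm_ring_1 \<Rightarrow> 'm::ab_group_add \<Rightarrow> 'm) \<Rightarrow> ('g \<Rightarrow> 'm set) \<Rightarrow> 'm set" where
  "J_gr scale Mg = (if \<exists>U. gr_maximal scale Mg U then \<Inter>{U. gr_maximal scale Mg U} else UNIV)"

definition gr_weakly_J_semiprime :: "('r::comm_ring_1 \<Rightarrow> 'm::ab_group_add \<Rightarrow> 'm) \<Rightarrow>
    ('g \<Rightarrow> 'r set) \<Rightarrow> ('g \<Rightarrow> 'm set) \<Rightarrow> 'm set \<Rightarrow> bool" where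
  "gr_weakly_J_semiprime scale Rg Mg U \<longleftrightarrow> gr_submod scale Mg U \<and> U \<noteq> UNIV \<and>
     (\<forall>r\<in>hom Rg. \<forall>m\<in>hom Mg. \<forall>n::nat. n \<ge> 1 \<longrightarrow>
        scale (r ^ n) m \<noteq> 0 \<longrightarrow> scale (r ^ n) m \<in> U \<longrightarrow>
        scale r m \<in> {u + j | u j. u \<in> U \<and> j \<in> J_gr scale Mg})"

definition gr_weakly_J_semiprime_ideal :: "('g \<Rightarrow> 'r::comm_ring_1 set) \<Rightarrow> 'r set \<Rightarrow> bool" where
  "gr_weakly_J_semiprime_ideal Rg L \<longleftrightarrow> gr_weakly_J_semiprime (*) Rg Rg L"

end

theory Submission
  imports Defs
begin

(* Let r, m be homogeneous with r^n m in LM. As M is a graded multiplication module, Rm = IM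
   for a graded ideal I. For homogeneous i in I the element a = r^n i maps M into R r^n m, which
   lies in LM; since M is finitely generated, a Nakayama-type argument gives a^e - l in ann(M),
   hence in L, for some l in L, so (ri)^(ne) lies in L. A homogeneous nilpotent lies in every
   Gr-maximal ideal, and otherwise weak J_gr-semiprimeness of L applied to ri and 1 puts ri in
   L + J_gr(R). Finally J_gr(R) M is contained in J_gr(M), because the colon of a Gr-maximal
   submodule by a homogeneous element outside it is a Gr-maximal ideal; hence rm lies in
   r I M, which is contained in LM + J_gr(M). *)

(* Ideals are the subspaces of the ring as a module over itself. Here scale_scale is
   mult.assoc reversed and would loop with algebra_simps. *)
interpretation ring_module: module "(*) :: 'a::comm_ring_1 \<Rightarrow> 'a \<Rightarrow> 'a"
  by unfold_locales (simp_all add: algebra_simps)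

declare ring_module.scale_scale [simp del]

lemma ideal_eq_UNIV_if_one_mem:
  "ring_module.subspace I \<Longrightarrow> (1 :: 'a::comm_ring_1) \<in> I \<Longrightarrow> I = UNIV"
  using ring_module.subspace_scale[of I 1] by auto

section \<open>A Nakayama-type lemma\<close>

context module
begin

lemma mem_span_insert_subspace:
  assumes "subspace K"
  shows "y \<in> span (insert x K) \<longleftrightarrow> (\<exists>s. y - s *s x \<in> K)"
  unfolding span_breakdown_eq span_eq_iff[THEN iffD2, OF assms] ..

lemma span_Un_subspaces:
  assumes "subspace U" "subspace V"
  shows "span (U \<union> V) = {u + v | u v. u \<in> U \<and> v \<in> V}"
  unfolding span_Un span_eq_iff[THEN iffD2, OF assms(1)] span_eq_iff[THEN iffD2, OF assms(2)] ..

lemma subspace_scale_preimage: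
  assumes "subspace K"
  shows "subspace {y. c *s y \<in> K}"
proof (rule subspaceI)
  show "d *s y \<in> {y. c *s y \<in> K}" if "y \<in> {y. c *s y \<in> K}" for d y
    using subspace_scale[OF assms, of "c *s y" d] that by (simp add: mult.commute)
qed (use assms in \<open>auto simp: scale_right_distrib intro: subspace_0 subspace_add\<close>)

lemma subspace_prod_submod: "subspace (prod_submod scale L S)"
  unfolding prod_submod_def by simp

lemma ex_ideal_coeff_scale_prod_submod:
  assumes K: "subspace K" and L: "ring_module.subspace L"
    and p: "\<And>z. z \<in> S \<Longrightarrow> p *s z \<in> span (insert x K)"
    and v: "v \<in> prod_submod scale L S"
  shows "\<exists>l\<in>L. p *s v - l *s x \<in> K"
proof -
  let ?T = "{v. \<exists>l\<in>L. p *s v - l *s x \<in> K}"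
  have "subspace ?T"
  proof (rule subspaceI)
    show "0 \<in> ?T" using subspace_0[OF K] ring_module.subspace_0[OF L] by force
    show "u + w \<in> ?T" if u: "u \<in> ?T" and w: "w \<in> ?T" for u w
    proof -
      obtain l1 l2 where "l1 \<in> L" "p *s u - l1 *s x \<in> K" "l2 \<in> L" "p *s w - l2 *s x \<in> K"
        using u w by blast
      moreover have "p *s (u + w) - (l1 + l2) *s x = (p *s u - l1 *s x) + (p *s w - l2 *s x)"
        by (simp add: algebra_simps)
      ultimately show ?thesis
        using subspace_add[OF K] ring_module.subspace_add[OF L] by (metis (mono_tags) mem_Collect_eq)
    qed
    show "c *s u \<in> ?T" if u: "u \<in> ?T" for c u
    proof -
      obtain l where "l \<in> L" "p *s u - l *s x \<in> K" using u by blast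
      moreover have "p *s (c *s u) - (c * l) *s x = c *s (p *s u - l *s x)"
        by (simp add: algebra_simps scale_left_commute[of p])
      ultimately show ?thesis
        using subspace_scale[OF K] ring_module.subspace_scale[OF L] by (metis (mono_tags) mem_Collect_eq)
    qed
  qed
  moreover have "l *s z \<in> ?T" if "l \<in> L" "z \<in> S" for l z
  proof -
    obtain s where "p *s z - s *s x \<in> K"
      using p[OF \<open>z \<in> S\<close>] mem_span_insert_subspace[OF K] by blast
    moreover have "p *s (l *s z) - (l * s) *s x = l *s (p *s z - s *s x)"
      by (simp add: algebra_simps scale_left_commute[of p])
    moreover have "l * s \<in> L"
      using ring_module.subspace_scale[OF L \<open>l \<in> L\<close>, of s] by (simp add: mult.commute)
    ultimately show ?thesis using subspace_scale[OF K] by (metis (mono_tags) mem_Collect_eq)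
  qed
  then have "{l *s z | l z. l \<in> L \<and> z \<in> S} \<subseteq> ?T" by blast
  ultimately show ?thesis using v span_minimal unfolding prod_submod_def by blast
qed

lemma nakayama_power_step:
  assumes K: "subspace K" and L: "ring_module.subspace L"
    and p: "\<And>y. y \<in> span (insert x X) \<Longrightarrow> p *s y \<in> span (insert x K)"
    and ax: "a *s x \<in> span (K \<union> prod_submod scale L (insert x X))"
  shows "\<exists>l'\<in>L. \<forall>y\<in>span (insert x X). ((p * a - l') * p) *s y \<in> K"
proof -
  obtain k v where kv: "k \<in> K" "v \<in> prod_submod scale L (insert x X)" "a *s x = k + v"
    using ax span_Un_subspaces[OF K subspace_prod_submod] by auto
  obtain l' where l': "l' \<in> L" "p *s v - l' *s x \<in> K"
    using ex_ideal_coeff_scale_prod_submod[OF K L _ kv(2)] p span_base by blast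
  have "(p * a - l') *s x = p *s (a *s x) - l' *s x"
    by (simp add: scale_left_diff_distrib)
  also have "\<dots> = p *s k + (p *s v - l' *s x)"
    using kv(3) by (simp add: scale_right_distrib)
  also have "\<dots> \<in> K"
    by (rule subspace_add[OF K subspace_scale[OF K kv(1)] l'(2)])
  finally have x: "(p * a - l') *s x \<in> K" .
  have "((p * a - l') * p) *s y \<in> K" if y: "y \<in> span (insert x X)" for y
  proof -
    obtain s where s: "p *s y - s *s x \<in> K"
      using p[OF y] mem_span_insert_subspace[OF K] by blast
    have "((p * a - l') * p) *s y = (p * a - l') *s (p *s y - s *s x) + s *s ((p * a - l') *s x)"
      by (simp add: scale_right_diff_distrib mult.commute[of s])
    also have "\<dots> \<in> K"
      by (rule subspace_add[OF K subspace_scale[OF K s] subspace_scale[OF K x]])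
    finally show ?thesis .
  qed
  then show ?thesis using l'(1) by blast
qed

lemma nakayama_power_relative:
  assumes "finite X" and L: "ring_module.subspace L"
  shows "subspace K \<Longrightarrow> (\<And>w. w \<in> X \<Longrightarrow> a *s w \<in> span (K \<union> prod_submod scale L X))
    \<Longrightarrow> \<exists>e. \<exists>l\<in>L. \<forall>y\<in>span X. (a ^ e - l) *s y \<in> K"
  using \<open>finite X\<close>
proof (induction X arbitrary: K rule: finite_induct)
  case empty
  then show ?case
    using subspace_0 ring_module.subspace_0[OF L] by (intro exI[of _ 0] bexI[of _ 0]) auto
next
  case (insert x X K)
  (* Enlarge K by x to pass to X, then remove x again at the cost of squaring a^e - l. *)
  note K = insert.prems(1)
  define K' where "K' = span (insert x K)"
  have "prod_submod scale L (insert x X) \<subseteq> span (K' \<union> prod_submod scale L X)"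
    unfolding prod_submod_def[of _ _ "insert x X"]
  proof (rule span_minimal)
    show "{l *s z | l z. l \<in> L \<and> z \<in> insert x X} \<subseteq> span (K' \<union> prod_submod scale L X)"
      unfolding K'_def prod_submod_def by (blast intro: span_base span_scale)
  qed simp
  moreover have "K \<subseteq> span (K' \<union> prod_submod scale L X)"
    unfolding K'_def using span_superset by blast
  ultimately have "span (K \<union> prod_submod scale L (insert x X)) \<subseteq> span (K' \<union> prod_submod scale L X)"
    by (simp add: span_minimal)
  then obtain e l where l: "l \<in> L" and p_X: "\<forall>y\<in>span X. (a ^ e - l) *s y \<in> K'"
    using insert.IH[of K'] insert.prems(2) unfolding K'_def by blast
  define p where "p = a ^ e - l"
  have "subspace {y. p *s y \<in> K'}" unfolding K'_def by (simp add: subspace_scale_preimage)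
  moreover have "insert x X \<subseteq> {y. p *s y \<in> K'}"
    using p_X span_base unfolding p_def K'_def by (auto intro: span_base span_scale)
  ultimately have "p *s y \<in> K'" if "y \<in> span (insert x X)" for y
    using span_minimal that by blast
  then obtain l' where l': "l' \<in> L" "\<forall>y\<in>span (insert x X). ((p * a - l') * p) *s y \<in> K"
    using nakayama_power_step[OF K L _ insert.prems(2)[of x]] unfolding K'_def by blast
  define l'' where "l'' = (2 * (a ^ e * a) - l * a) * l + p * l'"
  have "l'' \<in> L"
    unfolding l''_def by (rule ring_module.subspace_add[OF L ring_module.subspace_scale[OF L l]
          ring_module.subspace_scale[OF L l'(1)]])
  moreover have "(p * a - l') * p = a ^ (2 * e + 1) - l''"
  proof -
    have "((b - l) * a - l') * (b - l) = b * b * a - ((2 * (b * a) - l * a) * l + (b - l) * l')"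
      for b by (simp add: algebra_simps)
    moreover have "a ^ (2 * e + 1) = a ^ e * a ^ e * a" by (simp add: power_add mult_2)
    ultimately show ?thesis unfolding p_def l''_def by (simp only:)
  qed
  ultimately show ?case using l'(2) by (intro exI[of _ "2 * e + 1"] bexI[of _ l'']) simp_all
qed

lemma prod_submod_UNIV_subset:
  assumes "span A = UNIV"
  shows "prod_submod scale L UNIV \<subseteq> prod_submod scale L A"
  unfolding prod_submod_def[of _ _ UNIV]
proof (rule span_minimal)
  have "y \<in> {y. l *s y \<in> prod_submod scale L A}" if "l \<in> L" for l y
  proof -
    have "A \<subseteq> {y. l *s y \<in> prod_submod scale L A}"
      using that unfolding prod_submod_def by (blast intro: span_base)
    then have "span A \<subseteq> {y. l *s y \<in> prod_submod scale L A}"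
      unfolding prod_submod_def by (intro span_minimal subspace_scale_preimage subspace_span)
    then show ?thesis using assms by blast
  qed
  then show "{l *s y | l y. l \<in> L \<and> y \<in> UNIV} \<subseteq> prod_submod scale L A" by blast
qed (simp add: prod_submod_def)

lemma nakayama_power:
  assumes "finite A" "span A = UNIV" "ring_module.subspace L"
    and "\<And>y. a *s y \<in> prod_submod scale L UNIV"
  shows "\<exists>e. \<exists>l\<in>L. \<forall>y. (a ^ e - l) *s y = 0"
proof -
  have "a *s w \<in> span ({0} \<union> prod_submod scale L A)" for w
    using assms(4) prod_submod_UNIV_subset[OF assms(2)] span_superset by blast
  from nakayama_power_relative[OF assms(1,3) subspace_single_0 this] assms(2)
  show ?thesis by auto
qed

lemma power_mem_if_scale_mem_prod_submod:
  assumes "finite A" "span A = UNIV" and L: "ring_module.subspace L" and "ann scale \<subseteq> L"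
    and "\<And>y. a *s y \<in> prod_submod scale L UNIV"
  shows "\<exists>e. a ^ e \<in> L"
proof -
  obtain e l where "l \<in> L" "\<forall>y. (a ^ e - l) *s y = 0"
    using nakayama_power[OF assms(1-3,5)] by blast
  then have "(a ^ e - l) + l \<in> L"
    using assms(4) ring_module.subspace_add[OF L] unfolding ann_def by blast
  then show ?thesis by auto
qed

lemma prod_submod_neq_UNIV:
  assumes "finite A" "span A = UNIV" and L: "ring_module.subspace L" "L \<noteq> UNIV"
    and "ann scale \<subseteq> L"
  shows "prod_submod scale L UNIV \<noteq> UNIV"
proof
  assume "prod_submod scale L UNIV = UNIV"
  then obtain e where "1 ^ e \<in> L"
    using power_mem_if_scale_mem_prod_submod[OF assms(1-3,5), of 1] by auto
  then show False using ideal_eq_UNIV_if_one_mem[OF L(1)] L(2) by simp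
qed

end

section \<open>Homogeneous components\<close>

locale graded_decomposition =
  fixes A :: "'g \<Rightarrow> 'a::ab_group_add set"
  assumes zero_mem: "0 \<in> A g"
    and diff_mem: "a \<in> A g \<Longrightarrow> b \<in> A g \<Longrightarrow> a - b \<in> A g"
    and direct_sum: "dsum A UNIV"
begin

lemma uminus_mem: "b \<in> A g \<Longrightarrow> - b \<in> A g"
  using diff_mem[OF zero_mem] by (metis diff_0)

lemma add_mem: "a \<in> A g \<Longrightarrow> b \<in> A g \<Longrightarrow> a + b \<in> A g"
  using diff_mem[of a g "- b"] uminus_mem by simp

definition is_decomp :: "'a \<Rightarrow> ('g \<Rightarrow> 'a) \<Rightarrow> bool" where
  "is_decomp x c \<longleftrightarrow> (\<forall>g. c g \<in> A g) \<and> finite {g. c g \<noteq> 0} \<and> x = sum c {g. c g \<noteq> 0}"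

definition hcomp :: "'a \<Rightarrow> 'g \<Rightarrow> 'a" where
  "hcomp x = (THE c. is_decomp x c)"

lemma ex1_is_decomp: "\<exists>!c. is_decomp x c"
  using direct_sum unfolding dsum_def is_decomp_def by auto

lemma is_decomp_hcomp: "is_decomp x (hcomp x)"
  unfolding hcomp_def by (rule theI'[OF ex1_is_decomp])

lemma hcomp_unique: "is_decomp x c \<Longrightarrow> hcomp x = c"
  unfolding hcomp_def by (rule the1_equality[OF ex1_is_decomp])

lemma hcomp_mem [simp, intro]: "hcomp x g \<in> A g"
  using is_decomp_hcomp unfolding is_decomp_def by auto

lemma finite_hcomp_support [simp, intro]: "finite {g. hcomp x g \<noteq> 0}"
  using is_decomp_hcomp unfolding is_decomp_def by auto

lemma sum_hcomp: "sum (hcomp x) {g. hcomp x g \<noteq> 0} = x"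
  using is_decomp_hcomp unfolding is_decomp_def by auto

lemma sum_hcomp_superset:
  assumes "finite S" "{g. hcomp x g \<noteq> 0} \<subseteq> S"
  shows "sum (hcomp x) S = x"
proof -
  have "sum (hcomp x) {g. hcomp x g \<noteq> 0} = sum (hcomp x) S"
    by (rule sum.mono_neutral_left[OF assms]) auto
  then show ?thesis using sum_hcomp[of x] by simp
qed

lemma hcomp_eqI:
  assumes "\<And>g. c g \<in> A g" "finite S" "{g. c g \<noteq> 0} \<subseteq> S" "x = sum c S"
  shows "hcomp x = c"
proof (rule hcomp_unique)
  have "sum c {g. c g \<noteq> 0} = sum c S"
    by (rule sum.mono_neutral_left) (use assms in auto)
  moreover have "finite {g. c g \<noteq> 0}" using assms(2,3) by (rule finite_subset[rotated])
  ultimately show "is_decomp x c" using assms(1,4) unfolding is_decomp_def by simp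
qed

lemma hcomp_0: "hcomp 0 = (\<lambda>g. 0)"
  by (rule hcomp_eqI[where S="{}"]) (auto intro: zero_mem)

lemma hcomp_add: "hcomp (x + y) = (\<lambda>g. hcomp x g + hcomp y g)"
proof (rule hcomp_eqI[where S="{g. hcomp x g \<noteq> 0} \<union> {g. hcomp y g \<noteq> 0}"])
  show "x + y = (\<Sum>g\<in>{g. hcomp x g \<noteq> 0} \<union> {g. hcomp y g \<noteq> 0}. hcomp x g + hcomp y g)"
    by (simp add: sum.distrib sum_hcomp_superset)
qed (auto intro: add_mem)

lemma hcomp_sum: "finite I \<Longrightarrow> hcomp (sum f I) = (\<lambda>g. \<Sum>i\<in>I. hcomp (f i) g)"
  by (induct I rule: finite_induct) (auto simp: hcomp_0 hcomp_add)

lemma hcomp_homogeneous: "x \<in> A h \<Longrightarrow> hcomp x = (\<lambda>g. if g = h then x else 0)"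
  by (rule hcomp_eqI[where S="{h}"]) (auto intro: zero_mem)

end

section \<open>Graded submodules and the graded Jacobson radical\<close>

locale graded_module =
  fixes scale :: "'r::comm_ring_1 \<Rightarrow> 'm::ab_group_add \<Rightarrow> 'm"
    and Rg :: "'g::group_add \<Rightarrow> 'r set" and Mg :: "'g \<Rightarrow> 'm set"
  assumes gr_module: "gr_module scale Rg Mg" and gr_ring: "gr_ring Rg"
begin

sublocale module scale
  using gr_module unfolding gr_module_def by auto

sublocale M: graded_decomposition Mg
  using gr_module unfolding gr_module_def by unfold_locales auto

sublocale R: graded_decomposition Rg
  using gr_ring unfolding gr_ring_def gr_module_def by unfold_locales auto

lemma scale_homogeneous: "r \<in> Rg g \<Longrightarrow> m \<in> Mg h \<Longrightarrow> scale r m \<in> Mg (g + h)"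
  using gr_module unfolding gr_module_def by auto

lemma mult_homogeneous: "r \<in> Rg g \<Longrightarrow> s \<in> Rg h \<Longrightarrow> r * s \<in> Rg (g + h)"
  using gr_ring unfolding gr_ring_def gr_module_def by auto

lemma hcomp_scale_homogeneous:
  assumes m: "m \<in> Mg h"
  shows "M.hcomp (scale s m) = (\<lambda>k. scale (R.hcomp s (k - h)) m)"
proof (rule M.hcomp_eqI[where S="(\<lambda>g. g + h) ` {g. R.hcomp s g \<noteq> 0}"])
  show "scale (R.hcomp s (k - h)) m \<in> Mg k" for k
    using scale_homogeneous[OF R.hcomp_mem m, of s "k - h"] by simp
  show "{k. scale (R.hcomp s (k - h)) m \<noteq> 0} \<subseteq> (\<lambda>g. g + h) ` {g. R.hcomp s g \<noteq> 0}"
  proof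
    fix k assume "k \<in> {k. scale (R.hcomp s (k - h)) m \<noteq> 0}"
    then have "R.hcomp s (k - h) \<noteq> 0" by auto
    then show "k \<in> (\<lambda>g. g + h) ` {g. R.hcomp s g \<noteq> 0}"
      by (intro image_eqI[of _ _ "k - h"]) auto
  qed
  have "inj_on (\<lambda>g. g + h) {g. R.hcomp s g \<noteq> 0}" by (auto simp: inj_on_def)
  then have "(\<Sum>k\<in>(\<lambda>g. g + h) ` {g. R.hcomp s g \<noteq> 0}. scale (R.hcomp s (k - h)) m)
      = scale (sum (R.hcomp s) {g. R.hcomp s g \<noteq> 0}) m"
    by (simp add: sum.reindex scale_sum_left)
  then show "scale s m = (\<Sum>k\<in>(\<lambda>g. g + h) ` {g. R.hcomp s g \<noteq> 0}. scale (R.hcomp s (k - h)) m)"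
    by (simp add: R.sum_hcomp)
qed simp

lemma hcomp_scale:
  "M.hcomp (scale s z) g = (\<Sum>h\<in>{h. M.hcomp z h \<noteq> 0}. scale (R.hcomp s (g - h)) (M.hcomp z h))"
proof -
  have "scale s z = (\<Sum>h\<in>{h. M.hcomp z h \<noteq> 0}. scale s (M.hcomp z h))"
    unfolding scale_sum_right[symmetric] M.sum_hcomp ..
  then show ?thesis
    by (simp add: M.hcomp_sum hcomp_scale_homogeneous[OF M.hcomp_mem])
qed

lemma mem_if_hcomp_mem:
  assumes "subspace U" "\<And>g. M.hcomp x g \<in> U"
  shows "x \<in> U"
proof -
  have "sum (M.hcomp x) {g. M.hcomp x g \<noteq> 0} \<in> U"
    by (rule subspace_sum[OF assms(1) assms(2)])
  then show ?thesis by (simp only: M.sum_hcomp)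
qed

lemma gr_submod_iff:
  "gr_submod scale Mg U \<longleftrightarrow> subspace U \<and> (\<forall>x\<in>U. \<forall>g. M.hcomp x g \<in> U)"
proof
  assume U: "gr_submod scale Mg U"
  have "M.hcomp x g \<in> U" if "x \<in> U" for x g
  proof -
    obtain c where c: "\<forall>g. c g \<in> U \<inter> Mg g" "finite {g. c g \<noteq> 0}" "x = sum c {g. c g \<noteq> 0}"
      using U \<open>x \<in> U\<close> unfolding gr_submod_def dsum_def by blast
    then have "M.hcomp x = c" by (intro M.hcomp_unique) (auto simp: M.is_decomp_def)
    then show ?thesis using c by auto
  qed
  then show "subspace U \<and> (\<forall>x\<in>U. \<forall>g. M.hcomp x g \<in> U)"
    using U unfolding gr_submod_def by auto
next
  assume U: "subspace U \<and> (\<forall>x\<in>U. \<forall>g. M.hcomp x g \<in> U)"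
  have "\<exists>!c. (\<forall>g. c g \<in> U \<inter> Mg g) \<and> finite {g. c g \<noteq> 0} \<and> x = sum c {g. c g \<noteq> 0}"
    if "x \<in> U" for x
  proof (rule ex1I[of _ "M.hcomp x"])
    show "(\<forall>g. M.hcomp x g \<in> U \<inter> Mg g) \<and> finite {g. M.hcomp x g \<noteq> 0}
        \<and> x = sum (M.hcomp x) {g. M.hcomp x g \<noteq> 0}"
      using U that M.sum_hcomp[of x] by auto
  next
    fix c assume "(\<forall>g. c g \<in> U \<inter> Mg g) \<and> finite {g. c g \<noteq> 0} \<and> x = sum c {g. c g \<noteq> 0}"
    then have "M.is_decomp x c" unfolding M.is_decomp_def by auto
    then show "c = M.hcomp x" by (simp add: M.hcomp_unique)
  qed
  then show "gr_submod scale Mg U" using U unfolding gr_submod_def dsum_def by auto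
qed

lemma gr_submod_span_insert:
  assumes N: "gr_submod scale Mg N" and z: "z \<in> Mg k"
  shows "gr_submod scale Mg (span (insert z N))"
proof -
  have sN: "subspace N" using N gr_submod_iff by auto
  have "M.hcomp x g \<in> span (insert z N)" if x: "x \<in> span (insert z N)" for x g
  proof -
    obtain s where s: "x - scale s z \<in> N" using x mem_span_insert_subspace[OF sN] by blast
    have "M.hcomp x g = M.hcomp (x - scale s z) g + scale (R.hcomp s (g - k)) z"
      using M.hcomp_add[of "x - scale s z" "scale s z"] by (simp add: hcomp_scale_homogeneous[OF z])
    moreover have "M.hcomp (x - scale s z) g \<in> N" using N s gr_submod_iff by auto
    ultimately show ?thesis by (auto intro: span_add span_scale span_base)
  qed
  then show ?thesis using gr_submod_iff by auto
qed

lemma gr_maximal_span_insert: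
  assumes N: "gr_maximal scale Mg N" and z: "z \<in> Mg k" "z \<notin> N"
  shows "\<exists>s. y - scale s z \<in> N"
proof -
  have gN: "gr_submod scale Mg N" using N unfolding gr_maximal_def by auto
  have "N \<subseteq> span (insert z N)" "z \<in> span (insert z N)" by (auto intro: span_base)
  then have "span (insert z N) = UNIV"
    using N gr_submod_span_insert[OF gN z(1)] z(2) unfolding gr_maximal_def by blast
  then show ?thesis using mem_span_insert_subspace gN gr_submod_iff by blast
qed

lemma J_gr_subset: "gr_maximal scale Mg N \<Longrightarrow> J_gr scale Mg \<subseteq> N"
  unfolding J_gr_def by auto

lemma mem_J_grI: "(\<And>N. gr_maximal scale Mg N \<Longrightarrow> x \<in> N) \<Longrightarrow> x \<in> J_gr scale Mg"
  unfolding J_gr_def by auto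

lemma subspace_J_gr: "subspace (J_gr scale Mg)"
  unfolding J_gr_def gr_maximal_def using gr_submod_iff by (auto intro!: subspace_Inter)

end

(* A separate locale, since graded_module cannot be its own sublocale for R acting on itself. *)
locale graded_ring_module = graded_module
begin

sublocale RM: graded_module "(*)" Rg Rg
  by unfold_locales (use gr_ring in \<open>simp_all add: gr_ring_def\<close>)

lemma one_mem_degree_zero: "1 \<in> Rg 0"
proof -
  have hcomp_one_mult: "R.hcomp 1 g * x = 0" if g: "g \<noteq> 0" and x: "x \<in> Rg h" for g h x
  proof -
    have "R.hcomp (1 * x) (g + h) = R.hcomp 1 g * x"
      using RM.hcomp_scale_homogeneous[OF x, of 1] by simp
    moreover have "g + h \<noteq> h" using g by (metis add_diff_cancel diff_self)
    ultimately show ?thesis using R.hcomp_homogeneous[OF x] by simp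
  qed
  have "R.hcomp 1 g = 0" if g: "g \<noteq> 0" for g
  proof -
    have "R.hcomp 1 g = R.hcomp 1 g * sum (R.hcomp 1) {h. R.hcomp 1 h \<noteq> 0}"
      by (simp add: R.sum_hcomp)
    also have "\<dots> = (\<Sum>h\<in>{h. R.hcomp 1 h \<noteq> 0}. R.hcomp 1 g * R.hcomp 1 h)"
      by (rule sum_distrib_left)
    also have "\<dots> = 0" using hcomp_one_mult[OF g R.hcomp_mem] by simp
    finally show ?thesis .
  qed
  then have "sum (R.hcomp 1) {0} = 1"
    by (intro R.sum_hcomp_superset) auto
  then show ?thesis using R.hcomp_mem[of 1 0] by simp
qed

lemma gr_ideal_colon:
  assumes N: "gr_submod scale Mg N" and y: "y \<in> Mg h"
  shows "gr_submod (*) Rg {s. scale s y \<in> N}"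
proof -
  have sN: "subspace N" using N gr_submod_iff by auto
  have "ring_module.subspace {s. scale s y \<in> N}"
    by (rule ring_module.subspaceI)
      (auto simp: subspace_0[OF sN] scale_left_distrib subspace_add[OF sN]
        scale_scale[symmetric] subspace_scale[OF sN] simp del: scale_scale)
  moreover have "R.hcomp s g \<in> {s. scale s y \<in> N}" if "scale s y \<in> N" for s g
  proof -
    have "M.hcomp (scale s y) (g + h) = scale (R.hcomp s g) y"
      using hcomp_scale_homogeneous[OF y, of s] by simp
    moreover have "M.hcomp (scale s y) (g + h) \<in> N" using N that unfolding gr_submod_iff by blast
    ultimately show ?thesis by simp
  qed
  ultimately show ?thesis using RM.gr_submod_iff by auto
qed

lemma gr_maximal_colon:
  assumes N: "gr_maximal scale Mg N" and y: "y \<in> Mg h" "y \<notin> N"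
  shows "gr_maximal (*) Rg {s. scale s y \<in> N}" (is "gr_maximal _ _ ?P")
proof -
  have gP: "gr_submod (*) Rg ?P"
    using N gr_ideal_colon[OF _ y(1)] unfolding gr_maximal_def by auto
  have "V = UNIV" if V: "gr_submod (*) Rg V" "?P \<subseteq> V" "V \<noteq> ?P" for V
  proof -
    have sV: "ring_module.subspace V" using V RM.gr_submod_iff by auto
    obtain q where q: "q \<in> V" "q \<notin> ?P" using V by auto
    obtain g where g: "R.hcomp q g \<notin> ?P"
      using q(2) RM.mem_if_hcomp_mem[of ?P q] gP RM.gr_submod_iff by blast
    have "scale (R.hcomp q g) y \<in> Mg (g + h)" by (rule scale_homogeneous[OF R.hcomp_mem y(1)])
    then obtain s where "y - scale s (scale (R.hcomp q g) y) \<in> N"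
      using gr_maximal_span_insert[OF N] g by blast
    then have "1 - s * R.hcomp q g \<in> V"
      using V(2) by (auto simp: scale_left_diff_distrib)
    moreover have "s * R.hcomp q g \<in> V"
      using q(1) V RM.gr_submod_iff ring_module.subspace_scale[OF sV] by auto
    ultimately have "1 \<in> V" using ring_module.subspace_add[OF sV] by fastforce
    then show ?thesis using ideal_eq_UNIV_if_one_mem[OF sV] by simp
  qed
  moreover have "1 \<notin> ?P" using y(2) by simp
  then have "?P \<noteq> UNIV" by blast
  ultimately show ?thesis using gP unfolding gr_maximal_def by auto
qed

lemma scale_J_gr:
  assumes j: "j \<in> J_gr (*) Rg"
  shows "scale j y \<in> J_gr scale Mg"
proof (rule mem_J_grI)
  fix N assume N: "gr_maximal scale Mg N"
  have sN: "subspace N" using N gr_submod_iff unfolding gr_maximal_def by auto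
  have homogeneous: "scale j z \<in> N" if z: "z \<in> Mg h" for z h
  proof (cases "z \<in> N")
    case True then show ?thesis using subspace_scale[OF sN] by auto
  next
    case False
    then show ?thesis using RM.J_gr_subset[OF gr_maximal_colon[OF N z False]] j by auto
  qed
  then have "(\<Sum>h\<in>{h. M.hcomp y h \<noteq> 0}. scale j (M.hcomp y h)) \<in> N"
    by (intro subspace_sum[OF sN] homogeneous[OF M.hcomp_mem])
  then show "scale j y \<in> N"
    by (simp only: scale_sum_right[symmetric] M.sum_hcomp)
qed

lemma nilpotent_mem_J_gr:
  assumes x: "x \<in> Rg h" and nil: "x ^ n = 0"
  shows "x \<in> J_gr (*) Rg"
proof (rule RM.mem_J_grI)
  fix P assume P: "gr_maximal (*) Rg P"
  have sP: "ring_module.subspace P" using P RM.gr_submod_iff unfolding gr_maximal_def by auto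
  show "x \<in> P"
  proof (rule ccontr)
    assume "x \<notin> P"
    then obtain s where "1 - s * x \<in> P" using RM.gr_maximal_span_insert[OF P x] by blast
    then have "(\<Sum>i<n. (s * x) ^ i) * (1 - s * x) \<in> P" by (rule ring_module.subspace_scale[OF sP])
    moreover have "(\<Sum>i<n. (s * x) ^ i) * (1 - s * x) = 1"
      using one_diff_power_eq[of "s * x" n] nil by (simp add: power_mult_distrib mult.commute)
    ultimately have "1 \<in> P" by simp
    then show False using ideal_eq_UNIV_if_one_mem[OF sP] P unfolding gr_maximal_def by auto
  qed
qed

lemma gr_submod_prod_submod:
  assumes L: "gr_ideal Rg L"
  shows "gr_submod scale Mg (prod_submod scale L UNIV)"
proof -
  let ?G = "{scale k m | k m. k \<in> L \<and> m \<in> UNIV}"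
  let ?T = "{x. \<forall>g. M.hcomp x g \<in> span ?G}"
  have "subspace ?T"
    by (rule subspaceI)
      (simp_all add: M.hcomp_0 span_zero M.hcomp_add span_add hcomp_scale span_sum span_scale)
  moreover have "?G \<subseteq> ?T"
  proof clarify
    fix k m g assume "k \<in> L"
    then have "R.hcomp k d \<in> L" for d
      using L RM.gr_submod_iff unfolding gr_ideal_def by blast
    then show "M.hcomp (scale k m) g \<in> span ?G"
      unfolding hcomp_scale by (blast intro: span_sum span_base)
  qed
  ultimately have "span ?G \<subseteq> ?T" by (rule span_minimal[rotated])
  then show ?thesis unfolding gr_submod_iff prod_submod_def by auto
qed

lemma gr_weakly_J_semiprime_idealD:
  assumes "gr_weakly_J_semiprime_ideal Rg L"
  shows "gr_ideal Rg L" "ring_module.subspace L" "L \<noteq> UNIV"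
  using assms RM.gr_submod_iff
  unfolding gr_weakly_J_semiprime_ideal_def gr_weakly_J_semiprime_def gr_ideal_def by blast+

lemma weakly_J_semiprime_ideal_power:
  assumes L: "gr_weakly_J_semiprime_ideal Rg L" and b: "b \<in> Rg d" and bk: "b ^ k \<in> L"
  shows "b \<in> {u + j | u j. u \<in> L \<and> j \<in> J_gr (*) Rg}"
proof -
  note sL = gr_weakly_J_semiprime_idealD(2)[OF L]
  have semiprime: "\<And>r x n. r \<in> hom Rg \<Longrightarrow> x \<in> hom Rg \<Longrightarrow> n \<ge> 1 \<Longrightarrow> r ^ n * x \<noteq> 0
      \<Longrightarrow> r ^ n * x \<in> L \<Longrightarrow> r * x \<in> {u + j | u j. u \<in> L \<and> j \<in> J_gr (*) Rg}"
    using L unfolding gr_weakly_J_semiprime_ideal_def gr_weakly_J_semiprime_def by blast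
  have "k \<ge> 1"
    using bk ideal_eq_UNIV_if_one_mem[OF sL] gr_weakly_J_semiprime_idealD(3)[OF L] by (cases k) auto
  show ?thesis
  proof (cases "b ^ k = 0")
    case True
    then have "b \<in> J_gr (*) Rg" by (rule nilpotent_mem_J_gr[OF b])
    then show ?thesis using ring_module.subspace_0[OF sL] by force
  next
    case False
    have "b \<in> hom Rg" "1 \<in> hom Rg" using b one_mem_degree_zero unfolding hom_def by auto
    then show ?thesis using semiprime[of b 1 k] \<open>k \<ge> 1\<close> False bk by simp
  qed
qed

lemma scale_mem_prod_submod_plus_J_gr:
  assumes "u \<in> {l + j | l j. l \<in> L \<and> j \<in> J_gr (*) Rg}"
  shows "scale u y \<in> {v + j | v j. v \<in> prod_submod scale L UNIV \<and> j \<in> J_gr scale Mg}"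
proof -
  obtain l j where "u = l + j" "l \<in> L" "j \<in> J_gr (*) Rg" using assms by blast
  moreover have "scale l y \<in> prod_submod scale L UNIV"
    using \<open>l \<in> L\<close> unfolding prod_submod_def by (blast intro: span_base)
  ultimately show ?thesis using scale_J_gr by (auto simp: scale_left_distrib)
qed

lemma mult_mem_plus_J_gr_if_scale_mem_prod_submod:
  assumes A: "finite A" "span A = UNIV"
    and L: "gr_weakly_J_semiprime_ideal Rg L" and ann: "ann scale \<subseteq> L"
    and r: "r \<in> Rg g" and i: "i \<in> Rg d" and n: "n \<ge> 1"
    and ri: "\<And>y. scale (r ^ n * i) y \<in> prod_submod scale L UNIV"
  shows "r * i \<in> {u + j | u j. u \<in> L \<and> j \<in> J_gr (*) Rg}"
proof -
  note sL = gr_weakly_J_semiprime_idealD(2)[OF L]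
  obtain e where e: "(r ^ n * i) ^ e \<in> L"
    using power_mem_if_scale_mem_prod_submod[OF A sL ann ri] by blast
  have "e + (n * e - e) = n * e" using n by simp
  then have "i ^ (n * e) = i ^ e * i ^ (n * e - e)" by (metis power_add)
  then have "(r * i) ^ (n * e) = (r ^ n) ^ e * (i ^ e * i ^ (n * e - e))"
    by (simp only: power_mult_distrib power_mult[symmetric])
  also have "\<dots> = i ^ (n * e - e) * (r ^ n * i) ^ e"
    by (simp only: power_mult_distrib mult_ac)
  also have "\<dots> \<in> L" by (rule ring_module.subspace_scale[OF sL e])
  finally show ?thesis by (rule weakly_J_semiprime_ideal_power[OF L mult_homogeneous[OF r i]])
qed

lemma scale_mem_plus_J_gr_if_power_scale_mem:
  assumes A: "finite A" "span A = UNIV" and mult: "gr_mult_module scale Rg Mg"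
    and L: "gr_weakly_J_semiprime_ideal Rg L" and ann: "ann scale \<subseteq> L"
    and r: "r \<in> Rg g" and m: "m \<in> Mg h" and n: "n \<ge> 1"
    and rm: "scale (r ^ n) m \<in> prod_submod scale L UNIV"
  shows "scale r m \<in> {v + j | v j. v \<in> prod_submod scale L UNIV \<and> j \<in> J_gr scale Mg}"
    (is "_ \<in> ?W")
proof -
  have "gr_submod scale Mg {0}" by (simp add: gr_submod_iff M.hcomp_0)
  then obtain I where I: "gr_ideal Rg I" "span (insert m {0}) = prod_submod scale I UNIV"
    using mult gr_submod_span_insert[OF _ m] unfolding gr_mult_module_def by blast
  have "scale (r ^ n * i) y \<in> prod_submod scale L UNIV" if i: "i \<in> I" for i y
  proof -
    have "scale i y \<in> prod_submod scale I UNIV"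
      using i unfolding prod_submod_def by (blast intro: span_base)
    then obtain s where s: "scale i y = scale s m"
      using mem_span_insert_subspace[OF subspace_single_0] unfolding I(2)[symmetric] by auto
    have "scale (r ^ n * i) y = scale (r ^ n) (scale i y)" by (simp only: scale_scale)
    also have "\<dots> = scale s (scale (r ^ n) m)" unfolding s by (rule scale_left_commute)
    finally show ?thesis using subspace_scale[OF subspace_prod_submod rm] by simp
  qed
  then have homogeneous: "r * i \<in> {u + j | u j. u \<in> L \<and> j \<in> J_gr (*) Rg}"
    if "i \<in> I" "i \<in> Rg d" for i d
    using mult_mem_plus_J_gr_if_scale_mem_prod_submod[OF A L ann r _ n] that by blast
  have sLJ: "ring_module.subspace {u + j | u j. u \<in> L \<and> j \<in> J_gr (*) Rg}"
    unfolding ring_module.span_Un_subspaces[OF gr_weakly_J_semiprime_idealD(2)[OF L]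
        RM.subspace_J_gr, symmetric]
    by (rule ring_module.subspace_span)
  have "scale r (scale i y) \<in> ?W" if i: "i \<in> I" for i y
  proof -
    have "R.hcomp i d \<in> I" for d using I(1) i RM.gr_submod_iff unfolding gr_ideal_def by blast
    then have "(\<Sum>d\<in>{d. R.hcomp i d \<noteq> 0}. r * R.hcomp i d) \<in> {u + j | u j. u \<in> L \<and> j \<in> J_gr (*) Rg}"
      by (intro ring_module.subspace_sum[OF sLJ] homogeneous[OF _ R.hcomp_mem])
    then have "r * i \<in> {u + j | u j. u \<in> L \<and> j \<in> J_gr (*) Rg}"
      by (simp only: sum_distrib_left[symmetric] R.sum_hcomp)
    then show ?thesis using scale_mem_prod_submod_plus_J_gr by simp
  qed
  then have "{scale i y | i y. i \<in> I \<and> y \<in> UNIV} \<subseteq> {y. scale r y \<in> ?W}" by blast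
  moreover have "subspace ?W"
    unfolding span_Un_subspaces[OF subspace_prod_submod subspace_J_gr, symmetric]
    by (rule subspace_span)
  ultimately have "prod_submod scale I UNIV \<subseteq> {y. scale r y \<in> ?W}"
    unfolding prod_submod_def[of _ I] by (rule span_minimal[OF _ subspace_scale_preimage])
  moreover have "m \<in> span (insert m {0})" by (rule span_base) simp
  ultimately show ?thesis using I(2) by blast
qed

end

theorem theorem2p17:
  fixes scale :: "'r::comm_ring_1 \<Rightarrow> 'm::ab_group_add \<Rightarrow> 'm"
    and Rg :: "'g::group_add \<Rightarrow> 'r set" and Mg :: "'g \<Rightarrow> 'm set"
    and L :: "'r set"
  assumes "gr_ring Rg"
    and "gr_module scale Rg Mg"
    and "gr_fin_gen scale Mg"
    and "gr_mult_module scale Rg Mg"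
    and "gr_weakly_J_semiprime_ideal Rg L"
    and "ann scale \<subseteq> L"
  shows "gr_weakly_J_semiprime scale Rg Mg (prod_submod scale L UNIV)"
proof -
  interpret graded_ring_module scale Rg Mg
    by unfold_locales (fact assms(2), fact assms(1))
  obtain A where A: "finite A" "span A = UNIV"
    using assms(3) unfolding gr_fin_gen_def by blast
  note L = gr_weakly_J_semiprime_idealD[OF assms(5)]
  show ?thesis
    unfolding gr_weakly_J_semiprime_def hom_def
    using gr_submod_prod_submod[OF L(1)] prod_submod_neq_UNIV[OF A L(2,3) assms(6)]
      scale_mem_plus_J_gr_if_power_scale_mem[OF A assms(4,5,6)]
    by blast
qed

end
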